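(* Let $X_1, \dots, X_n$ be nonnegative random variables on a probability space $(\Omega, \mathcal{F}, \mathbb{P})$, let $\emptyset \neq \mathcal{S} \subseteq \{1, \dots, n\}$, and let $\mathbf{u} = (u_\lambda : \emptyset \neq \lambda \subseteq \mathcal{S})$ be real thresholds. Let $\emptyset \neq \mu \subseteq \mathcal{S}$ and suppose $u_\mu \geq u_\lambda$ for all $\lambda$ with $\mu \subsetneq \lambda \subseteq \mathcal{S}$. Then for every $\sigma \subseteq \mu$, $$B_\mu(\mathbf{u}) = A_\mu(u_\mu) \cap \bigcap_{\mu \subsetneq \lambda \subseteq \mathcal{S}} \overline{A_{\lambda \setminus \sigma}(u_\lambda)}.$$
   Context: For $\mu \subseteq \mathcal{S}$ and $u \in \mathbb{R}$, $A_\mu(u) := \bigcap_{i \in \mu} \{X_i > u\}$ (with $A_\emptyset(u) = \Omega$). For $\mu \subseteq \mathcal{S}$, $B_\mu(\mathbf{u}) := A_\mu(u_\mu) \cap \bigcap_{\mu \subsetneq \lambda \subseteq \mathcal{S}} \overline{A_\lambda(u_\lambda)}$, where $\overline{E}$ denotes the complement of an event $E$ (and $A_\emptyset(u_\emptyset) := \Omega$). *)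

theory Defs
  imports "HOL-Probability.Probability"
begin

definition exceed_event :: "'a measure \<Rightarrow> (nat \<Rightarrow> 'a \<Rightarrow> real) \<Rightarrow> nat set \<Rightarrow> real \<Rightarrow> 'a set" where
  "exceed_event M X \<mu> u = {\<omega> \<in> space M. \<forall>i\<in>\<mu>. X i \<omega> > u}"

definition B_event :: "'a measure \<Rightarrow> (nat \<Rightarrow> 'a \<Rightarrow> real) \<Rightarrow> nat set \<Rightarrow> (nat set \<Rightarrow> real) \<Rightarrow> nat set \<Rightarrow> 'a set" where
  "B_event M X S u \<mu> = exceed_event M X \<mu> (u \<mu>) \<inter>
     (\<Inter>l\<in>{l. \<mu> \<subset> l \<and> l \<subseteq> S}. space M - exceed_event M X l (u l))"

end

theory Submission
  imports Defs
begin

text \<open>On \<open>A\<^sub>\<mu>(u\<^sub>\<mu>)\<close> every \<open>X\<^sub>i\<close> with \<open>i \<in> \<mu>\<close> already exceeds the lower threshold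
  \<open>u\<^sub>\<lambda> \<le> u\<^sub>\<mu>\<close>, so the indices of \<open>\<sigma> \<subseteq> \<mu>\<close> impose no further constraint in
  \<open>A\<^sub>\<lambda>(u\<^sub>\<lambda>)\<close> and may be dropped.\<close>

lemma exceed_event_mono:
  assumes "\<sigma> \<subseteq> \<mu>" and "w \<le> v"
  shows "exceed_event M X \<mu> v \<subseteq> exceed_event M X \<sigma> w"
  using assms unfolding exceed_event_def by (auto intro: order.strict_trans1)

lemma exceed_event_Un:
  "exceed_event M X (l \<union> \<sigma>) u = exceed_event M X l u \<inter> exceed_event M X \<sigma> u"
  unfolding exceed_event_def by blast

lemma Int_exceed_event_Diff:
  assumes "\<sigma> \<subseteq> \<mu>" and "w \<le> v"
  shows "exceed_event M X \<mu> v \<inter> exceed_event M X (l - \<sigma>) w =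
    exceed_event M X \<mu> v \<inter> exceed_event M X l w"
proof -
  have "exceed_event M X l w \<subseteq> exceed_event M X (l - \<sigma>) w"
    by (rule exceed_event_mono) auto
  moreover have "exceed_event M X \<mu> v \<inter> exceed_event M X (l - \<sigma>) w \<subseteq> exceed_event M X l w"
  proof -
    have "exceed_event M X \<mu> v \<subseteq> exceed_event M X \<sigma> w"
      using assms by (rule exceed_event_mono)
    then have "exceed_event M X \<mu> v \<inter> exceed_event M X (l - \<sigma>) w \<subseteq>
        exceed_event M X ((l - \<sigma>) \<union> \<sigma>) w"
      unfolding exceed_event_Un by blast
    also have "\<dots> \<subseteq> exceed_event M X l w"
      by (rule exceed_event_mono) auto
    finally show ?thesis .
  qed
  ultimately show ?thesis by blast
qed

theorem lemma15:
  fixes M :: "'a measure" and X :: "nat \<Rightarrow> 'a \<Rightarrow> real" and n :: nat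
    and S \<mu> \<sigma> :: "nat set" and u :: "nat set \<Rightarrow> real"
  assumes "prob_space M"
    and "\<And>i. i \<in> {1..n} \<Longrightarrow> X i \<in> borel_measurable M"
    and "\<And>i \<omega>. i \<in> {1..n} \<Longrightarrow> \<omega> \<in> space M \<Longrightarrow> X i \<omega> \<ge> 0"
    and "S \<noteq> {}" and "S \<subseteq> {1..n}"
    and "\<mu> \<noteq> {}" and "\<mu> \<subseteq> S"
    and "\<And>l. \<mu> \<subset> l \<Longrightarrow> l \<subseteq> S \<Longrightarrow> u \<mu> \<ge> u l"
    and "\<sigma> \<subseteq> \<mu>"
  shows "B_event M X S u \<mu> = exceed_event M X \<mu> (u \<mu>) \<inter>
     (\<Inter>l\<in>{l. \<mu> \<subset> l \<and> l \<subseteq> S}. space M - exceed_event M X (l - \<sigma>) (u l))"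
proof -
  let ?A = "exceed_event M X \<mu> (u \<mu>)"
  have drop_\<sigma>: "?A \<inter> exceed_event M X (l - \<sigma>) (u l) = ?A \<inter> exceed_event M X l (u l)"
    if "\<mu> \<subset> l" "l \<subseteq> S" for l
    using that by (intro Int_exceed_event_Diff assms(8,9)) auto
  show ?thesis
    unfolding B_event_def
  proof (intro equalityI subsetI)
    fix \<omega> assume "\<omega> \<in> ?A \<inter> (\<Inter>l\<in>{l. \<mu> \<subset> l \<and> l \<subseteq> S}. space M - exceed_event M X l (u l))"
    then show "\<omega> \<in> ?A \<inter> (\<Inter>l\<in>{l. \<mu> \<subset> l \<and> l \<subseteq> S}. space M - exceed_event M X (l - \<sigma>) (u l))"
      using drop_\<sigma> by blast
  next
    fix \<omega> assume "\<omega> \<in> ?A \<inter> (\<Inter>l\<in>{l. \<mu> \<subset> l \<and> l \<subseteq> S}. space M - exceed_event M X (l - \<sigma>) (u l))"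
    then show "\<omega> \<in> ?A \<inter> (\<Inter>l\<in>{l. \<mu> \<subset> l \<and> l \<subseteq> S}. space M - exceed_event M X l (u l))"
      using drop_\<sigma> by blast
  qed
qed

end
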